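(* Let $R$ be a von Neumann regular semiartinian ring with primitive factors artinian, of Loewy length $\sigma+1$, with dimension sequence $\{(\lambda_\alpha,\{(n_{\alpha\beta},K_{\alpha\beta})\mid\beta<\lambda_\alpha\})\mid\alpha\le\sigma\}$. Then the following are equivalent: (i) $R$ is commutative; (ii) for all $\alpha\le\sigma$ and $\beta<\lambda_\alpha$, $K_{\alpha\beta}$ is commutative and $n_{\alpha\beta}=1$; (iii) for each $\beta<\lambda_0$, $K_{0\beta}$ is commutative and $n_{0\beta}=1$.
   Context: Socle sequence of $R$: $S_0=0$, $S_{\alpha+1}/S_\alpha=\mathrm{Soc}(R/S_\alpha)$, unions at limits; semiartinian of Loewy length $\sigma+1$ means $S_{\sigma+1}=R$. Primitive factors artinian: $R/P$ artinian for each primitive ideal $P$. For such rings, for each $\alpha\le\sigma$ the layer $S_{\alpha+1}/S_\alpha$ is isomorphic as a ring without unit to $\bigoplus_{\beta<\lambda_\alpha}M_{n_{\alpha\beta}}(K_{\alpha\beta})$, where $\lambda_\alpha>0$ is the number of homogeneous components of the layer, $n_{\alpha\beta}$ positive integers and $K_{\alpha\beta}$ skew-fields (with $K_{\alpha\beta}$ the endomorphism ring of the simple module whose isotypic component is the $\beta$-th homogeneous component); these data form the dimension sequence of $R$. *)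

theory Defs
  imports Main
begin

text \<open>Modules are right R-modules; subquotients J/I of R (I a two-sided ideal, J a right
  ideal containing I) are represented by the pair of sets I, J, and maps between them
  by functions on representatives, all congruences being taken modulo I.\<close>

definition right_ideal :: "'a::ring_1 set \<Rightarrow> bool" where
  "right_ideal J \<longleftrightarrow> 0 \<in> J \<and> (\<forall>x\<in>J. \<forall>y\<in>J. x + y \<in> J) \<and> (\<forall>x\<in>J. - x \<in> J)
     \<and> (\<forall>x\<in>J. \<forall>r. x * r \<in> J)"

definition gen_right_ideal :: "'a::ring_1 set \<Rightarrow> 'a set" where
  "gen_right_ideal X = \<Inter>{K. right_ideal K \<and> X \<subseteq> K}"

text \<open>J/I is a simple right module (J a minimal right ideal over I)\<close>
definition minimal_over :: "'a::ring_1 set \<Rightarrow> 'a set \<Rightarrow> bool" where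
  "minimal_over I J \<longleftrightarrow> right_ideal J \<and> I \<subset> J \<and>
     (\<forall>J'. right_ideal J' \<and> I \<subset> J' \<and> J' \<subseteq> J \<longrightarrow> J' = J)"

text \<open>preimage in R of the socle of the right module R/I\<close>
definition soc_succ :: "'a::ring_1 set \<Rightarrow> 'a set" where
  "soc_succ I = gen_right_ideal (I \<union> \<Union>{J. minimal_over I J})"

text \<open>The set of all terms S_alpha of the socle sequence: S_0 = 0, successor steps,
  unions at limits (= unions of nonempty chains of earlier terms).\<close>
inductive_set socle_seq :: "'a::ring_1 set set" where
  zero: "{0} \<in> socle_seq"
| succ: "I \<in> socle_seq \<Longrightarrow> soc_succ I \<in> socle_seq"
| union: "(\<And>I. I \<in> C \<Longrightarrow> I \<in> socle_seq) \<Longrightarrow> C \<noteq> {} \<Longrightarrow> Complete_Partial_Order.chain (\<subseteq>) C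
          \<Longrightarrow> \<Union>C \<in> socle_seq"

definition semiartinian :: "'a::ring_1 itself \<Rightarrow> bool" where
  "semiartinian _ \<longleftrightarrow> (UNIV :: 'a set) \<in> socle_seq"

definition vN_regular :: "'a::ring_1 itself \<Rightarrow> bool" where
  "vN_regular _ \<longleftrightarrow> (\<forall>a::'a. \<exists>x. a * x * a = a)"

definition maximal_right_ideal :: "'a::ring_1 set \<Rightarrow> bool" where
  "maximal_right_ideal M \<longleftrightarrow> right_ideal M \<and> M \<noteq> UNIV \<and>
     (\<forall>N. right_ideal N \<and> M \<subseteq> N \<longrightarrow> N = M \<or> N = UNIV)"

definition primitive_ideal :: "'a::ring_1 set \<Rightarrow> bool" where
  "primitive_ideal P \<longleftrightarrow> (\<exists>M. maximal_right_ideal M \<and> P = {r. \<forall>x. x * r \<in> M})"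

text \<open>R/P is (right) artinian: DCC on right ideals containing P\<close>
definition artinian_quot :: "'a::ring_1 set \<Rightarrow> bool" where
  "artinian_quot P \<longleftrightarrow>
     wf {(A, B). right_ideal A \<and> right_ideal B \<and> P \<subseteq> A \<and> A \<subset> B}"

definition primitive_factors_artinian :: "'a::ring_1 itself \<Rightarrow> bool" where
  "primitive_factors_artinian _ \<longleftrightarrow>
     (\<forall>P::'a set. primitive_ideal P \<longrightarrow> artinian_quot P)"

text \<open>f represents an R-homomorphism J/I \<rightarrow> J'/I\<close>
definition rmod_hom :: "'a::ring_1 set \<Rightarrow> 'a set \<Rightarrow> 'a set \<Rightarrow> ('a \<Rightarrow> 'a) \<Rightarrow> bool" where
  "rmod_hom I J J' f \<longleftrightarrow> (\<forall>x\<in>J. f x \<in> J') \<and> (\<forall>x\<in>I. f x \<in> I) \<and>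
     (\<forall>x\<in>J. \<forall>y\<in>J. f (x + y) - (f x + f y) \<in> I) \<and>
     (\<forall>x\<in>J. \<forall>r. f (x * r) - f x * r \<in> I)"

definition rmod_iso :: "'a::ring_1 set \<Rightarrow> 'a set \<Rightarrow> 'a set \<Rightarrow> ('a \<Rightarrow> 'a) \<Rightarrow> bool" where
  "rmod_iso I J J' f \<longleftrightarrow> rmod_hom I J J' f \<and> (\<forall>x\<in>J. f x \<in> I \<longrightarrow> x \<in> I) \<and>
     (\<forall>y\<in>J'. \<exists>x\<in>J. y - f x \<in> I)"

text \<open>K = End_R(J/I) is commutative\<close>
definition end_commutative :: "'a::ring_1 set \<Rightarrow> 'a set \<Rightarrow> bool" where
  "end_commutative I J \<longleftrightarrow> (\<forall>f g. rmod_hom I J J f \<longrightarrow> rmod_hom I J J g \<longrightarrow>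
     (\<forall>x\<in>J. f (g x) - g (f x) \<in> I))"

text \<open>preimage of the homogeneous (isotypic) component of Soc(R/I) of the simple module J/I\<close>
definition homog_comp :: "'a::ring_1 set \<Rightarrow> 'a set \<Rightarrow> 'a set" where
  "homog_comp I J = gen_right_ideal (I \<union> \<Union>{J'. minimal_over I J' \<and> (\<exists>f. rmod_iso I J J' f)})"

text \<open>H/I is a direct sum of n simple modules\<close>
definition decomp_length :: "'a::ring_1 set \<Rightarrow> 'a set \<Rightarrow> nat \<Rightarrow> bool" where
  "decomp_length I H n \<longleftrightarrow> (\<exists>F. finite F \<and> card F = n \<and> (\<forall>J\<in>F. minimal_over I J) \<and>
     gen_right_ideal (I \<union> \<Union>F) = H \<and>
     (\<forall>J\<in>F. J \<inter> gen_right_ideal (I \<union> \<Union>(F - {J})) = I))"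

text \<open>n_{alpha beta}: the homogeneous component of J/I is isomorphic to M_n(K), whose
  length as a right module is n, i.e. it is the direct sum of n copies of J/I\<close>
definition dim_n :: "'a::ring_1 set \<Rightarrow> 'a set \<Rightarrow> nat" where
  "dim_n I J = (THE n. decomp_length I (homog_comp I J) n)"

text \<open>condition on the dimension data of the layer S_{alpha+1}/S_alpha, where I = S_alpha;
  beta ranges over homogeneous components, each represented by a simple J/I\<close>
definition layer_cond :: "'a::ring_1 set \<Rightarrow> bool" where
  "layer_cond I \<longleftrightarrow> (\<forall>J. minimal_over I J \<longrightarrow> end_commutative I J \<and> dim_n I J = 1)"

end

theory Submission
  imports Defs "HOL-Library.Set_Algebras"
begin

text \<open>If R is commutative, every simple subquotient J/I of R is cyclic, so its endomorphisms are
  multiplications by ring elements and commute; and two distinct simple subquotients J/I and J'/I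
  are never isomorphic, because J J' lies in J \<inter> J' = I while regularity keeps J' from
  annihilating J'/I. So every layer has commutative skew-fields and all n = 1.

  Conversely, assume the condition for the bottom layer. A minimal right ideal J = eR is annihilated
  from the right by the primitive ideal P of R/{r. e r = 0}, and so is its homogeneous component,
  which therefore meets P trivially; since R/P is artinian the component is a finite direct sum of
  copies of J, and n = 1 says it is J itself. Hence J is a two-sided ideal whose left
  multiplications are endomorphisms, so J is a commutative ring and every commutator of R
  annihilates J. Thus commutators annihilate the socle, which in a regular semiartinian ring is
  essential and hence faithful, and R is commutative.\<close>

section \<open>Right ideals and their sums\<close>

lemma right_idealI:
  assumes "0 \<in> J" "\<And>x y. x \<in> J \<Longrightarrow> y \<in> J \<Longrightarrow> x + y \<in> J"
    and "\<And>x. x \<in> J \<Longrightarrow> - x \<in> J" "\<And>x r. x \<in> J \<Longrightarrow> x * r \<in> J"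
  shows "right_ideal J"
  using assms unfolding right_ideal_def by auto

lemma right_idealD:
  assumes "right_ideal J"
  shows right_ideal_0: "0 \<in> J"
    and right_ideal_add: "x \<in> J \<Longrightarrow> y \<in> J \<Longrightarrow> x + y \<in> J"
    and right_ideal_minus: "x \<in> J \<Longrightarrow> - x \<in> J"
    and right_ideal_mult: "x \<in> J \<Longrightarrow> x * r \<in> J"
  using assms unfolding right_ideal_def by auto

lemma right_ideal_diff: "right_ideal J \<Longrightarrow> x \<in> J \<Longrightarrow> y \<in> J \<Longrightarrow> x - y \<in> J"
  by (metis right_ideal_add right_ideal_minus diff_conv_add_uminus)

lemma right_ideal_UNIV: "right_ideal (UNIV :: 'a::ring_1 set)"
  by (rule right_idealI) auto

lemma right_ideal_zero: "right_ideal ({0} :: 'a::ring_1 set)"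
  by (rule right_idealI) auto

lemma right_ideal_Int: "right_ideal A \<Longrightarrow> right_ideal B \<Longrightarrow> right_ideal (A \<inter> B)"
  unfolding right_ideal_def by auto

lemma right_ideal_Union_directed:
  assumes "\<And>I. I \<in> C \<Longrightarrow> right_ideal I" "C \<noteq> {}"
    and directed: "\<And>A B. A \<in> C \<Longrightarrow> B \<in> C \<Longrightarrow> \<exists>D\<in>C. A \<subseteq> D \<and> B \<subseteq> D"
  shows "right_ideal (\<Union>C)"
proof (rule right_idealI)
  show "0 \<in> \<Union>C" using assms(1,2) right_ideal_0 by blast
  show "x + y \<in> \<Union>C" if xy: "x \<in> \<Union>C" "y \<in> \<Union>C" for x y
  proof -
    obtain A B where "A \<in> C" "B \<in> C" "x \<in> A" "y \<in> B" using xy by blast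
    moreover obtain D where "D \<in> C" "A \<subseteq> D" "B \<subseteq> D" using directed[OF \<open>A \<in> C\<close> \<open>B \<in> C\<close>] by blast
    ultimately have "x + y \<in> D" using right_ideal_add[OF assms(1)[OF \<open>D \<in> C\<close>]] by blast
    then show ?thesis using \<open>D \<in> C\<close> by blast
  qed
  show "- x \<in> \<Union>C" if "x \<in> \<Union>C" for x
    using that assms(1) right_ideal_minus by blast
  show "x * r \<in> \<Union>C" if "x \<in> \<Union>C" for x r
    using that assms(1) right_ideal_mult by blast
qed

lemma right_ideal_Union_chain:
  assumes "\<And>I. I \<in> C \<Longrightarrow> right_ideal I" "C \<noteq> {}" "Complete_Partial_Order.chain (\<subseteq>) C"
  shows "right_ideal (\<Union>C)"
proof (rule right_ideal_Union_directed[OF assms(1,2)])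
  fix A B assume "A \<in> C" "B \<in> C"
  then have "A \<subseteq> B \<or> B \<subseteq> A" using assms(3) unfolding chain_def by blast
  then show "\<exists>D\<in>C. A \<subseteq> D \<and> B \<subseteq> D" using \<open>A \<in> C\<close> \<open>B \<in> C\<close> by blast
qed

lemma right_ideal_plus:
  assumes A: "right_ideal A" and B: "right_ideal B"
  shows "right_ideal (A + B)"
proof (rule right_idealI)
  show "0 \<in> A + B" using set_plus_intro[OF right_ideal_0[OF A] right_ideal_0[OF B]] by simp
  show "x + y \<in> A + B" if "x \<in> A + B" "y \<in> A + B" for x y
  proof -
    obtain a b where ab: "x = a + b" "a \<in> A" "b \<in> B" using \<open>x \<in> A + B\<close> by (rule set_plus_elim)
    obtain a' b' where ab': "y = a' + b'" "a' \<in> A" "b' \<in> B" using \<open>y \<in> A + B\<close> by (rule set_plus_elim)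
    have "a + a' \<in> A" "b + b' \<in> B" using ab ab' A B by (simp_all add: right_ideal_add)
    moreover have "x + y = (a + a') + (b + b')" using ab ab' by (simp add: algebra_simps)
    ultimately show ?thesis by (simp add: set_plus_intro)
  qed
  show "- x \<in> A + B" if x: "x \<in> A + B" for x
  proof -
    obtain a b where ab: "x = a + b" "a \<in> A" "b \<in> B" using x by (rule set_plus_elim)
    then show ?thesis using set_plus_intro[of "- a" A "- b" B] A B by (simp add: right_ideal_minus)
  qed
  show "x * r \<in> A + B" if x: "x \<in> A + B" for x r
  proof -
    obtain a b where ab: "x = a + b" "a \<in> A" "b \<in> B" using x by (rule set_plus_elim)
    then have "x * r = a * r + b * r" by (simp add: distrib_right)
    then show ?thesis using ab A B by (simp add: right_ideal_mult set_plus_intro)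
  qed
qed

lemma set_plus_upper2: "right_ideal A \<Longrightarrow> B \<subseteq> A + B"
  by (rule set_zero_plus2[OF right_ideal_0])

lemma set_plus_upper1: "right_ideal B \<Longrightarrow> A \<subseteq> A + B"
  by (subst add.commute) (rule set_plus_upper2)

lemma set_plus_least:
  assumes "right_ideal C" "A \<subseteq> C" "B \<subseteq> C"
  shows "A + B \<subseteq> C"
proof
  fix x assume "x \<in> A + B"
  then obtain a b where "x = a + b" "a \<in> A" "b \<in> B" by (rule set_plus_elim)
  then show "x \<in> C" using assms right_ideal_add by blast
qed

lemma set_plus_absorb: "right_ideal A \<Longrightarrow> right_ideal B \<Longrightarrow> B \<subseteq> A \<Longrightarrow> A + B = A"
  by (intro subset_antisym set_plus_least set_plus_upper1) auto

lemma right_ideal_modular: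
  assumes A: "right_ideal A" and C: "right_ideal C" and AC: "A \<subseteq> C"
  shows "C \<inter> (A + B) = A + (C \<inter> B)"
proof
  show "C \<inter> (A + B) \<subseteq> A + (C \<inter> B)"
  proof
    fix x assume x: "x \<in> C \<inter> (A + B)"
    then obtain a b where ab: "x = a + b" "a \<in> A" "b \<in> B" by (blast elim: set_plus_elim)
    then have "b = x - a" by simp
    then have "b \<in> C" using x ab AC right_ideal_diff[OF C] by blast
    then show "x \<in> A + (C \<inter> B)" using ab by (simp add: set_plus_intro)
  qed
  show "A + (C \<inter> B) \<subseteq> C \<inter> (A + B)"
  proof
    fix x assume "x \<in> A + (C \<inter> B)"
    then obtain a b where ab: "x = a + b" "a \<in> A" "b \<in> C \<inter> B" by (rule set_plus_elim)
    then have "x \<in> C" using AC right_ideal_add[OF C] by blast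
    then show "x \<in> C \<inter> (A + B)" using ab by (simp add: set_plus_intro)
  qed
qed

lemma right_ideal_eq_if_Int_plus_eq:
  assumes A: "right_ideal A" and B: "right_ideal B" and H: "right_ideal H" and AB: "A \<subseteq> B"
    and "A \<inter> H = B \<inter> H" "A + H = B + H"
  shows "A = B"
proof -
  have "B = B \<inter> (A + H)" using \<open>A + H = B + H\<close> set_plus_upper1[OF H, of B] by blast
  also have "\<dots> = A + (B \<inter> H)" using right_ideal_modular[OF A B AB] .
  also have "\<dots> = A + (A \<inter> H)" using \<open>A \<inter> H = B \<inter> H\<close> by simp
  also have "\<dots> = A" using set_plus_absorb[OF A right_ideal_Int[OF A H]] by simp
  finally show ?thesis ..
qed

lemma right_ideal_gen_right_ideal: "right_ideal (gen_right_ideal X)"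
  unfolding gen_right_ideal_def right_ideal_def by auto

lemma gen_right_ideal_upper: "X \<subseteq> gen_right_ideal X"
  unfolding gen_right_ideal_def by auto

lemma gen_right_ideal_least: "right_ideal K \<Longrightarrow> X \<subseteq> K \<Longrightarrow> gen_right_ideal X \<subseteq> K"
  unfolding gen_right_ideal_def by auto

lemma gen_right_ideal_mono: "X \<subseteq> Y \<Longrightarrow> gen_right_ideal X \<subseteq> gen_right_ideal Y"
  by (rule gen_right_ideal_least[OF right_ideal_gen_right_ideal]) (use gen_right_ideal_upper in blast)

lemma gen_right_ideal_eq: "right_ideal K \<Longrightarrow> gen_right_ideal K = K"
  by (intro subset_antisym gen_right_ideal_least gen_right_ideal_upper) auto

lemma gen_right_ideal_absorb: "gen_right_ideal (gen_right_ideal X \<union> Y) = gen_right_ideal (X \<union> Y)"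
proof (rule subset_antisym)
  have "gen_right_ideal X \<subseteq> gen_right_ideal (X \<union> Y)" by (rule gen_right_ideal_mono) simp
  moreover have "Y \<subseteq> gen_right_ideal (X \<union> Y)" using gen_right_ideal_upper by blast
  ultimately show "gen_right_ideal (gen_right_ideal X \<union> Y) \<subseteq> gen_right_ideal (X \<union> Y)"
    by (simp add: gen_right_ideal_least right_ideal_gen_right_ideal)
  have "X \<union> Y \<subseteq> gen_right_ideal X \<union> Y" using gen_right_ideal_upper by blast
  then show "gen_right_ideal (X \<union> Y) \<subseteq> gen_right_ideal (gen_right_ideal X \<union> Y)"
    by (rule gen_right_ideal_mono)
qed

lemma gen_right_ideal_Un:
  assumes "right_ideal A" "right_ideal B"
  shows "gen_right_ideal (A \<union> B) = A + B"
proof (rule subset_antisym)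
  have "A \<subseteq> A + B" "B \<subseteq> A + B"
    by (simp_all add: assms set_plus_upper1 set_plus_upper2)
  then show "gen_right_ideal (A \<union> B) \<subseteq> A + B"
    by (simp add: assms gen_right_ideal_least right_ideal_plus)
  have "A \<subseteq> gen_right_ideal (A \<union> B)" "B \<subseteq> gen_right_ideal (A \<union> B)"
    using gen_right_ideal_upper by blast+
  then show "A + B \<subseteq> gen_right_ideal (A \<union> B)"
    by (simp add: set_plus_least right_ideal_gen_right_ideal)
qed

lemma gen_right_ideal_insert:
  assumes "right_ideal K"
  shows "gen_right_ideal (I \<union> \<Union>(insert K F)) = gen_right_ideal (I \<union> \<Union>F) + K"
proof -
  have "I \<union> \<Union>(insert K F) = (I \<union> \<Union>F) \<union> K" by auto
  then have "gen_right_ideal (I \<union> \<Union>(insert K F)) = gen_right_ideal (gen_right_ideal (I \<union> \<Union>F) \<union> K)"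
    by (simp only: gen_right_ideal_absorb)
  then show ?thesis by (simp add: gen_right_ideal_Un right_ideal_gen_right_ideal assms)
qed

lemma gen_right_ideal_lower: "I \<subseteq> gen_right_ideal (I \<union> X)"
  using gen_right_ideal_upper[of "I \<union> X"] by blast

lemma gen_right_ideal_member: "K \<in> F \<Longrightarrow> K \<subseteq> gen_right_ideal (I \<union> \<Union>F)"
  using gen_right_ideal_upper[of "I \<union> \<Union>F"] by blast

lemma gen_right_ideal_finite_support:
  assumes "x \<in> gen_right_ideal (I \<union> \<Union>A)"
  obtains G where "finite G" "G \<subseteq> A" "x \<in> gen_right_ideal (I \<union> \<Union>G)"
proof -
  define \<G> where "\<G> = {G. finite G \<and> G \<subseteq> A}"
  have "right_ideal (\<Union>G\<in>\<G>. gen_right_ideal (I \<union> \<Union>G))"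
  proof (rule right_ideal_Union_directed)
    show "(\<lambda>G. gen_right_ideal (I \<union> \<Union>G)) ` \<G> \<noteq> {}" unfolding \<G>_def by blast
    fix S T assume "S \<in> (\<lambda>G. gen_right_ideal (I \<union> \<Union>G)) ` \<G>" "T \<in> (\<lambda>G. gen_right_ideal (I \<union> \<Union>G)) ` \<G>"
    then obtain G1 G2 where G: "G1 \<in> \<G>" "G2 \<in> \<G>"
      and ST: "S = gen_right_ideal (I \<union> \<Union>G1)" "T = gen_right_ideal (I \<union> \<Union>G2)" by blast
    have "S \<subseteq> gen_right_ideal (I \<union> \<Union>(G1 \<union> G2))" "T \<subseteq> gen_right_ideal (I \<union> \<Union>(G1 \<union> G2))"
      unfolding ST by (intro gen_right_ideal_mono, blast)+
    moreover have "G1 \<union> G2 \<in> \<G>" using G unfolding \<G>_def by blast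
    then have "gen_right_ideal (I \<union> \<Union>(G1 \<union> G2)) \<in> (\<lambda>G. gen_right_ideal (I \<union> \<Union>G)) ` \<G>"
      by (rule imageI)
    ultimately show "\<exists>D\<in>(\<lambda>G. gen_right_ideal (I \<union> \<Union>G)) ` \<G>. S \<subseteq> D \<and> T \<subseteq> D" by blast
  qed (use right_ideal_gen_right_ideal in blast)
  moreover have "I \<union> \<Union>A \<subseteq> (\<Union>G\<in>\<G>. gen_right_ideal (I \<union> \<Union>G))"
  proof
    fix y assume "y \<in> I \<union> \<Union>A"
    then consider "y \<in> I" | K where "K \<in> A" "y \<in> K" by blast
    then obtain G where "G \<in> \<G>" "y \<in> I \<union> \<Union>G"
    proof cases
      case 1
      then show ?thesis using that[of "{}"] unfolding \<G>_def by simp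
    next
      case 2
      then show ?thesis using that[of "{K}"] unfolding \<G>_def by simp
    qed
    then show "y \<in> (\<Union>G\<in>\<G>. gen_right_ideal (I \<union> \<Union>G))"
      using gen_right_ideal_upper[of "I \<union> \<Union>G"] by blast
  qed
  ultimately have "gen_right_ideal (I \<union> \<Union>A) \<subseteq> (\<Union>G\<in>\<G>. gen_right_ideal (I \<union> \<Union>G))"
    by (rule gen_right_ideal_least)
  with assms obtain G where "G \<in> \<G>" "x \<in> gen_right_ideal (I \<union> \<Union>G)" by blast
  then show ?thesis using that unfolding \<G>_def by blast
qed

section \<open>Sums of simple modules\<close>

lemma minimal_overD:
  assumes "minimal_over I J"
  shows minimal_over_right_ideal: "right_ideal J"
    and minimal_over_psubset: "I \<subset> J"
    and minimal_over_eq: "right_ideal J' \<Longrightarrow> I \<subset> J' \<Longrightarrow> J' \<subseteq> J \<Longrightarrow> J' = J"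
  using assms unfolding minimal_over_def by auto

lemma minimal_over_cases:
  assumes "minimal_over I J" "right_ideal Y" "I \<subseteq> Y" "Y \<subseteq> J"
  shows "Y = I \<or> Y = J"
  using assms minimal_over_eq[OF assms(1)] by blast

lemma minimal_over_Int_cases:
  assumes "minimal_over I K" "right_ideal L" "I \<subseteq> L"
  shows "K \<subseteq> L \<or> K \<inter> L = I"
proof -
  have "right_ideal (K \<inter> L)" "I \<subseteq> K \<inter> L"
    using assms minimal_overD(1,2)[OF assms(1)] right_ideal_Int by blast+
  then have "K \<inter> L = I \<or> K \<inter> L = K" using minimal_over_cases[OF assms(1)] by blast
  then show ?thesis by blast
qed

lemma right_ideal_between_plus_minimal:
  assumes I: "right_ideal I" and K: "minimal_over I K" and H: "right_ideal H" "I \<subseteq> H"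
    and L: "right_ideal L" "H \<subseteq> L" "L \<subseteq> H + K"
  shows "L = H \<or> L = H + K"
proof -
  have "I \<subseteq> L" using H L by blast
  from minimal_over_Int_cases[OF K L(1) this] show ?thesis
  proof
    assume "K \<subseteq> L"
    then have "H + K \<subseteq> L" using set_plus_least L by blast
    then show ?thesis using L by blast
  next
    assume KL: "K \<inter> L = I"
    have "L = L \<inter> (H + K)" using L by blast
    also have "\<dots> = H + (L \<inter> K)" using right_ideal_modular[OF H(1) L(1,2)] .
    also have "\<dots> = H" using KL set_plus_absorb[OF H(1) I H(2)] by (simp add: Int_commute)
    finally show ?thesis ..
  qed
qed

definition chain_steps :: "(nat \<Rightarrow> 'a) \<Rightarrow> nat \<Rightarrow> nat set" where
  "chain_steps c m = {i. i < m \<and> c i \<noteq> c (Suc i)}"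

lemma finite_chain_steps: "finite (chain_steps c m)"
  unfolding chain_steps_def by (rule finite_subset[of _ "{..<m}"]) auto

lemma card_chain_steps_le_one:
  fixes e :: "nat \<Rightarrow> 'a::order"
  assumes e: "mono e" and two_values: "\<And>i. e i = a \<or> e i = b"
  shows "card (chain_steps e m) \<le> 1"
proof -
  have "\<not> (i < j \<and> i \<in> chain_steps e m \<and> j \<in> chain_steps e m)" for i j
  proof
    assume ij: "i < j \<and> i \<in> chain_steps e m \<and> j \<in> chain_steps e m"
    then have "e i < e (Suc i)" "e (Suc i) \<le> e j" "e j < e (Suc j)"
      using monoD[OF e] unfolding chain_steps_def by (auto simp: order_less_le)
    then show False using two_values[of i] two_values[of j] two_values[of "Suc j"] by auto
  qed
  then have "i = j" if "i \<in> chain_steps e m" "j \<in> chain_steps e m" for i j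
    using that by (cases i j rule: linorder_cases) auto
  then show ?thesis by (simp add: card_le_Suc0_iff_eq finite_chain_steps)
qed

lemma card_chain_steps_le_Int_plus:
  assumes c: "mono c" "\<And>i. right_ideal (c i)" and H: "right_ideal H"
  shows "card (chain_steps c m) \<le>
    card (chain_steps (\<lambda>i. c i \<inter> H) m) + card (chain_steps (\<lambda>i. c i + H) m)"
proof -
  have "c i = c (Suc i)" if "c i \<inter> H = c (Suc i) \<inter> H" "c i + H = c (Suc i) + H" for i
    using right_ideal_eq_if_Int_plus_eq[OF c(2) c(2) H monoD[OF c(1)]] that by simp
  then have "chain_steps c m \<subseteq> chain_steps (\<lambda>i. c i \<inter> H) m \<union> chain_steps (\<lambda>i. c i + H) m"
    unfolding chain_steps_def by blast
  then have "card (chain_steps c m) \<le> card (chain_steps (\<lambda>i. c i \<inter> H) m \<union> chain_steps (\<lambda>i. c i + H) m)"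
    by (intro card_mono finite_UnI finite_chain_steps)
  also have "\<dots> \<le> card (chain_steps (\<lambda>i. c i \<inter> H) m) + card (chain_steps (\<lambda>i. c i + H) m)"
    by (rule card_Un_le)
  finally show ?thesis .
qed

text \<open>A chain inside a sum of n simple modules has at most n proper steps: intersect the chain
  with the sum H of all summands but the last one K, and add H to it. The intersections form a chain
  in H, with at most n - 1 steps by induction, the sums lie between H and H + K, so they step at most
  once, and by modularity the original chain steps only where one of the two does.\<close>

lemma card_chain_steps_le:
  assumes F: "finite F" "\<forall>K\<in>F. minimal_over I K" and I: "right_ideal I"
    and c: "mono c" "\<And>i. right_ideal (c i) \<and> I \<subseteq> c i \<and> c i \<subseteq> gen_right_ideal (I \<union> \<Union>F)"
  shows "card (chain_steps c m) \<le> card F"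
  using F c
proof (induction F arbitrary: c rule: finite_induct)
  case empty
  then have "c i = I" for i using gen_right_ideal_eq[OF I] by (simp add: subset_antisym)
  then show ?case by (simp add: chain_steps_def)
next
  case (insert K F c)
  define H where "H = gen_right_ideal (I \<union> \<Union>F)"
  have K: "minimal_over I K" using insert.prems by simp
  have Kr: "right_ideal K" using minimal_over_right_ideal[OF K] .
  have H: "right_ideal H" "I \<subseteq> H" unfolding H_def
    using right_ideal_gen_right_ideal gen_right_ideal_lower by blast+
  have c_ri: "right_ideal (c i)" for i using insert.prems(3) by blast
  have cH: "c i \<subseteq> H + K" for i
    using insert.prems(3)[of i] gen_right_ideal_insert[OF Kr, of I F] unfolding H_def by simp
  define d where "d i = c i \<inter> H" for i
  define e where "e i = c i + H" for i
  have d_steps: "card (chain_steps d m) \<le> card F"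
  proof (rule insert.IH)
    show "\<forall>K\<in>F. minimal_over I K" using insert.prems by simp
    show "mono d" using insert.prems(2) unfolding d_def mono_def by blast
    show "right_ideal (d i) \<and> I \<subseteq> d i \<and> d i \<subseteq> gen_right_ideal (I \<union> \<Union>F)" for i
      using insert.prems(3)[of i] H right_ideal_Int unfolding d_def H_def by blast
  qed
  have e_steps: "card (chain_steps e m) \<le> 1"
  proof (rule card_chain_steps_le_one)
    show "mono e" unfolding e_def
      by (intro monoI set_plus_mono2 monoD[OF insert.prems(2)] order_refl)
    show "e i = H \<or> e i = H + K" for i
    proof (rule right_ideal_between_plus_minimal[OF I K H])
      show "right_ideal (e i)" unfolding e_def using right_ideal_plus[OF c_ri H(1)] .
      show "H \<subseteq> e i" unfolding e_def using set_plus_upper2[OF c_ri] .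
      show "e i \<subseteq> H + K" unfolding e_def
        using set_plus_least[OF right_ideal_plus[OF H(1) Kr] cH set_plus_upper1[OF Kr]] .
    qed
  qed
  have "card (chain_steps c m) \<le> card (chain_steps d m) + card (chain_steps e m)"
    unfolding d_def e_def by (rule card_chain_steps_le_Int_plus[OF insert.prems(2) c_ri H(1)])
  then show ?case using d_steps e_steps insert.hyps by simp
qed

definition independent_over :: "'a::ring_1 set \<Rightarrow> 'a set set \<Rightarrow> bool" where
  "independent_over I F \<longleftrightarrow> (\<forall>K\<in>F. K \<inter> gen_right_ideal (I \<union> \<Union>(F - {K})) = I)"

lemma decomp_length_iff:
  "decomp_length I H n \<longleftrightarrow> (\<exists>F. finite F \<and> card F = n \<and> (\<forall>K\<in>F. minimal_over I K) \<and>
     gen_right_ideal (I \<union> \<Union>F) = H \<and> independent_over I F)"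
  unfolding decomp_length_def independent_over_def ..

lemma decomp_length_le_card:
  assumes I: "right_ideal I" and n: "decomp_length I H n"
    and G: "finite G" "\<forall>K\<in>G. minimal_over I K" "gen_right_ideal (I \<union> \<Union>G) = H"
  shows "n \<le> card G"
proof -
  obtain F where F: "finite F" "card F = n" "\<forall>K\<in>F. minimal_over I K"
    "gen_right_ideal (I \<union> \<Union>F) = H" "independent_over I F"
    using n unfolding decomp_length_iff by blast
  obtain f where f: "bij_betw f {..<n} F"
    using ex_bij_betw_nat_finite[OF F(1)] F(2) by (auto simp: atLeast0LessThan)
  define c where "c i = gen_right_ideal (I \<union> \<Union>(f ` {..<min i n}))" for i
  have "card (chain_steps c n) \<le> card G"
  proof (rule card_chain_steps_le[OF G(1,2) I])
    show "mono c" unfolding c_def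
      by (intro monoI gen_right_ideal_mono) (auto simp: Union_mono image_mono)
    fix i
    have "f ` {..<min i n} \<subseteq> F" using bij_betw_imp_surj_on[OF f] by auto
    then show "right_ideal (c i) \<and> I \<subseteq> c i \<and> c i \<subseteq> gen_right_ideal (I \<union> \<Union>G)"
      unfolding c_def G(3) F(4)[symmetric]
      by (intro conjI right_ideal_gen_right_ideal gen_right_ideal_lower gen_right_ideal_mono) blast
  qed
  moreover have "c i \<noteq> c (Suc i)" if i: "i < n" for i
  proof
    assume eq: "c i = c (Suc i)"
    have fi: "f i \<in> F" using bij_betw_apply[OF f] i by simp
    have fi_le: "f i \<subseteq> c (Suc i)" unfolding c_def using i gen_right_ideal_member[of "f i"] by simp
    have "f j \<noteq> f i" if "j < i" for j
      using inj_onD[OF bij_betw_imp_inj_on[OF f], of j i] that i by auto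
    moreover have "f j \<in> F" if "j < i" for j using bij_betw_apply[OF f] that i by simp
    ultimately have "f ` {..<i} \<subseteq> F - {f i}" by blast
    then have "c i \<subseteq> gen_right_ideal (I \<union> \<Union>(F - {f i}))"
      unfolding c_def using i by (intro gen_right_ideal_mono) auto
    then have "f i \<subseteq> I" using F(5) fi eq fi_le unfolding independent_over_def by blast
    then show False using minimal_over_psubset F(3) fi by blast
  qed
  then have "chain_steps c n = {..<n}" unfolding chain_steps_def by auto
  ultimately show ?thesis by simp
qed

lemma decomp_length_unique:
  assumes I: "right_ideal I" and n: "decomp_length I H n" and m: "decomp_length I H m"
  shows "n = m"
proof -
  have "n \<le> k" if "decomp_length I H n" "decomp_length I H k" for n k
    using that(2) decomp_length_le_card[OF I that(1)] unfolding decomp_length_def by blast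
  then show ?thesis using n m by (simp add: antisym)
qed

lemma dim_n_eqI:
  assumes "right_ideal I" "decomp_length I (homog_comp I J) n"
  shows "dim_n I J = n"
  unfolding dim_n_def
  using assms(2) decomp_length_unique[OF assms(1) _ assms(2)] by (rule the_equality)

lemma independent_over_insert:
  assumes I: "right_ideal I" and K: "right_ideal K" "I \<subseteq> K"
    and F: "\<forall>K'\<in>F. I \<subseteq> K'" "independent_over I F"
    and KF: "K \<inter> gen_right_ideal (I \<union> \<Union>F) = I"
  shows "independent_over I (insert K F)"
  unfolding independent_over_def
proof
  fix K' assume K': "K' \<in> insert K F"
  define S where "S = gen_right_ideal (I \<union> \<Union>F)"
  define T where "T = gen_right_ideal (I \<union> \<Union>(F - {K'}))"
  have S: "right_ideal S" unfolding S_def by (rule right_ideal_gen_right_ideal)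
  have IT: "I \<subseteq> T" unfolding T_def by (rule gen_right_ideal_lower)
  have TS: "T \<subseteq> S" unfolding T_def S_def by (intro gen_right_ideal_mono) blast
  show "K' \<inter> gen_right_ideal (I \<union> \<Union>(insert K F - {K'})) = I"
  proof (cases "K' = K")
    case True
    have "gen_right_ideal (I \<union> \<Union>(insert K F - {K'})) \<subseteq> S"
      unfolding S_def True by (intro gen_right_ideal_mono) blast
    moreover have "I \<subseteq> gen_right_ideal (I \<union> \<Union>(insert K F - {K'}))"
      by (rule gen_right_ideal_lower)
    ultimately show ?thesis using KF K(2) True unfolding S_def by blast
  next
    case False
    then have K'F: "K' \<in> F" using K' by simp
    have "insert K F - {K'} = insert K (F - {K'})" using False by blast
    then have sum: "gen_right_ideal (I \<union> \<Union>(insert K F - {K'})) = T + K"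
      unfolding T_def by (simp only: gen_right_ideal_insert[OF K(1)])
    have "x \<in> I" if x: "x \<in> K'" "x \<in> T + K" for x
    proof -
      obtain t k where tk: "x = t + k" "t \<in> T" "k \<in> K" using x(2) by (rule set_plus_elim)
      have "x \<in> S" using x(1) K'F gen_right_ideal_member unfolding S_def by blast
      then have "x - t \<in> S" using tk(2) TS right_ideal_diff[OF S] by blast
      then have "k \<in> K \<inter> S" using tk by simp
      then have "k \<in> I" using KF unfolding S_def by blast
      then have "x \<in> T" using tk IT right_ideal_add[OF right_ideal_gen_right_ideal] unfolding T_def
        by blast
      then show ?thesis using x(1) F(2) K'F unfolding independent_over_def T_def by blast
    qed
    moreover have "I \<subseteq> T + K" using IT set_plus_upper1[OF K(1)] by blast
    ultimately show ?thesis using sum F(1) K'F by blast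
  qed
qed

lemma independent_over_finite_character:
  assumes "\<And>G. finite G \<Longrightarrow> G \<subseteq> F \<Longrightarrow> independent_over I G"
  shows "independent_over I F"
  unfolding independent_over_def
proof
  fix K assume K: "K \<in> F"
  have "K \<inter> gen_right_ideal (I \<union> \<Union>({K} - {K})) = I"
    using assms[of "{K}"] K unfolding independent_over_def by simp
  then have "I \<subseteq> K" by blast
  moreover have "x \<in> I" if x: "x \<in> K" "x \<in> gen_right_ideal (I \<union> \<Union>(F - {K}))" for x
  proof -
    obtain G where G: "finite G" "G \<subseteq> F - {K}" "x \<in> gen_right_ideal (I \<union> \<Union>G)"
      using x(2) by (rule gen_right_ideal_finite_support)
    then have "insert K G - {K} = G" by blast
    then have "K \<inter> gen_right_ideal (I \<union> \<Union>G) = I"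
      using assms[of "insert K G"] G K unfolding independent_over_def by force
    then show ?thesis using x(1) G(3) by blast
  qed
  ultimately show "K \<inter> gen_right_ideal (I \<union> \<Union>(F - {K})) = I"
    using gen_right_ideal_lower[of I] by blast
qed

lemma independent_subfamily:
  assumes I: "right_ideal I" and F: "finite F" "\<forall>K\<in>F. minimal_over I K"
  obtains F' where "F' \<subseteq> F" "gen_right_ideal (I \<union> \<Union>F') = gen_right_ideal (I \<union> \<Union>F)"
    "independent_over I F'"
proof -
  have "\<exists>F'\<subseteq>F. gen_right_ideal (I \<union> \<Union>F') = gen_right_ideal (I \<union> \<Union>F) \<and> independent_over I F'"
    using F
  proof (induction F rule: finite_induct)
    case empty
    then show ?case by (auto simp: independent_over_def)
  next
    case (insert K F)
    then obtain F' where F': "F' \<subseteq> F" "gen_right_ideal (I \<union> \<Union>F') = gen_right_ideal (I \<union> \<Union>F)"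
      "independent_over I F'" by auto
    define S where "S = gen_right_ideal (I \<union> \<Union>F')"
    have K: "minimal_over I K" using insert.prems by simp
    have Kr: "right_ideal K" using minimal_over_right_ideal[OF K] .
    have S: "right_ideal S" "I \<subseteq> S" unfolding S_def
      by (simp_all add: right_ideal_gen_right_ideal gen_right_ideal_lower)
    have span: "gen_right_ideal (I \<union> \<Union>(insert K F)) = S + K"
      using gen_right_ideal_insert[OF Kr, of I F] F'(2) unfolding S_def by simp
    from minimal_over_Int_cases[OF K S] show ?case
    proof
      assume "K \<subseteq> S"
      then have "S + K = S" using set_plus_absorb[OF S(1) Kr] by simp
      then have "gen_right_ideal (I \<union> \<Union>F') = gen_right_ideal (I \<union> \<Union>(insert K F))"
        using span unfolding S_def by simp
      then show ?thesis using F'(1,3) by (intro exI[of _ F']) auto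
    next
      assume KS: "K \<inter> S = I"
      have "independent_over I (insert K F')"
      proof (rule independent_over_insert[OF I Kr _ _ F'(3)])
        show "I \<subseteq> K" using minimal_over_psubset[OF K] by blast
        show "\<forall>K'\<in>F'. I \<subseteq> K'" using F'(1) insert.prems minimal_over_psubset by blast
        show "K \<inter> gen_right_ideal (I \<union> \<Union>F') = I" using KS unfolding S_def .
      qed
      moreover have "gen_right_ideal (I \<union> \<Union>(insert K F')) = S + K"
        using gen_right_ideal_insert[OF Kr, of I F'] unfolding S_def .
      ultimately show ?thesis using F'(1) span by (intro exI[of _ "insert K F'"]) auto
    qed
  qed
  then show ?thesis using that by blast
qed

lemma decomp_length_exists:
  assumes I: "right_ideal I" and F: "finite F" "\<forall>K\<in>F. minimal_over I K"
  shows "\<exists>n. decomp_length I (gen_right_ideal (I \<union> \<Union>F)) n"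
proof -
  obtain F' where F': "F' \<subseteq> F" "gen_right_ideal (I \<union> \<Union>F') = gen_right_ideal (I \<union> \<Union>F)"
    "independent_over I F'"
    using independent_subfamily[OF I F] by blast
  then have "decomp_length I (gen_right_ideal (I \<union> \<Union>F)) (card F')"
    unfolding decomp_length_iff using finite_subset[OF F'(1) F(1)] F(2) by blast
  then show ?thesis ..
qed

text \<open>U is mapped injectively into the simple module (H + K)/H.\<close>

lemma minimal_over_if_Int_eq:
  assumes I: "right_ideal I" and K: "minimal_over I K" and H: "right_ideal H" "I \<subseteq> H"
    and U: "right_ideal U" "I \<subset> U" "U \<subseteq> H + K" and UH: "U \<inter> H = I"
  shows "minimal_over I U"
  unfolding minimal_over_def
proof (intro conjI allI impI U(1,2))
  have Kr: "right_ideal K" using minimal_over_right_ideal[OF K] .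
  have sum: "V + H = H + K" if V: "right_ideal V" "V \<inter> H = I" "I \<subset> V" "V \<subseteq> U" for V
  proof -
    have "V + H \<noteq> H" using V set_plus_upper1[OF H(1), of V] by blast
    moreover have "V + H \<subseteq> H + K"
      using set_plus_least[OF right_ideal_plus[OF H(1) Kr]] V(4) U(3) set_plus_upper1[OF Kr, of H]
      by blast
    ultimately show ?thesis
      using right_ideal_between_plus_minimal[OF I K H right_ideal_plus[OF V(1) H(1)]]
        set_plus_upper2[OF V(1), of H] by blast
  qed
  fix Y assume Y: "right_ideal Y \<and> I \<subset> Y \<and> Y \<subseteq> U"
  have YH: "Y \<inter> H = I" using Y UH by blast
  have "Y + H = U + H" using sum Y YH UH U by auto
  then show "Y = U" using right_ideal_eq_if_Int_plus_eq[OF _ U(1) H(1)] Y YH UH by blast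
qed

lemma minimal_over_below:
  assumes I: "right_ideal I" and F: "finite F" "\<forall>K\<in>F. minimal_over I K"
    and U: "right_ideal U" "I \<subset> U" "U \<subseteq> gen_right_ideal (I \<union> \<Union>F)"
  shows "\<exists>K. minimal_over I K \<and> K \<subseteq> U"
  using F U
proof (induction F arbitrary: U rule: finite_induct)
  case empty
  then show ?case using gen_right_ideal_eq[OF I] by simp
next
  case (insert K F U)
  define H where "H = gen_right_ideal (I \<union> \<Union>F)"
  have K: "minimal_over I K" using insert.prems by simp
  have H: "right_ideal H" "I \<subseteq> H" unfolding H_def
    by (simp_all add: right_ideal_gen_right_ideal gen_right_ideal_lower)
  have UHK: "U \<subseteq> H + K"
    using insert.prems(4) gen_right_ideal_insert[OF minimal_over_right_ideal[OF K], of I F]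
    unfolding H_def by simp
  consider "U \<inter> H \<noteq> I" | "U \<inter> H = I" by blast
  then show ?case
  proof cases
    case 1
    have "\<forall>K\<in>F. minimal_over I K" using insert.prems(1) by simp
    moreover have "right_ideal (U \<inter> H)" using right_ideal_Int[OF insert.prems(2) H(1)] .
    moreover have "I \<subset> U \<inter> H" using 1 insert.prems(3) H(2) by blast
    moreover have "U \<inter> H \<subseteq> gen_right_ideal (I \<union> \<Union>F)" unfolding H_def by blast
    ultimately obtain K' where "minimal_over I K'" "K' \<subseteq> U \<inter> H" using insert.IH by blast
    then show ?thesis by blast
  next
    case 2
    then have "minimal_over I U"
      using minimal_over_if_Int_eq[OF I K H insert.prems(2,3) UHK] by blast
    then show ?thesis by blast
  qed
qed

lemma independent_over_subset:
  assumes "independent_over I F" "G \<subseteq> F"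
  shows "independent_over I G"
  unfolding independent_over_def
proof
  fix K assume K: "K \<in> G"
  have "gen_right_ideal (I \<union> \<Union>(G - {K})) \<subseteq> gen_right_ideal (I \<union> \<Union>(F - {K}))"
    using assms(2) by (intro gen_right_ideal_mono) blast
  moreover have "K \<inter> gen_right_ideal (I \<union> \<Union>(F - {K})) = I"
    using assms K unfolding independent_over_def by blast
  moreover have "I \<subseteq> gen_right_ideal (I \<union> \<Union>(G - {K}))" by (rule gen_right_ideal_lower)
  ultimately show "K \<inter> gen_right_ideal (I \<union> \<Union>(G - {K})) = I" by blast
qed

lemma greedy_sequence:
  assumes "\<And>G. finite G \<Longrightarrow> G \<subseteq> \<J> \<Longrightarrow> \<exists>K\<in>\<J>. \<not> K \<subseteq> gen_right_ideal (I \<union> \<Union>G)"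
  obtains Js :: "nat \<Rightarrow> 'a::ring_1 set"
  where "range Js \<subseteq> \<J>" "\<And>n. \<not> Js n \<subseteq> gen_right_ideal (I \<union> \<Union>(Js ` {..<n}))"
proof -
  obtain ch where ch: "\<And>G. finite G \<Longrightarrow> G \<subseteq> \<J> \<Longrightarrow>
      ch G \<in> \<J> \<and> \<not> ch G \<subseteq> gen_right_ideal (I \<union> \<Union>G)"
    using assms by metis
  define Gs where "Gs n = ((\<lambda>G. insert (ch G) G) ^^ n) {}" for n
  define Js where "Js n = ch (Gs n)" for n
  have Gs_Suc: "Gs (Suc n) = insert (Js n) (Gs n)" for n by (simp add: Gs_def Js_def)
  have Gs: "finite (Gs n) \<and> Gs n \<subseteq> \<J>" for n
    by (induction n) (simp_all add: Gs_def[of 0] Gs_Suc Js_def ch)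
  have prefix: "Gs n = Js ` {..<n}" for n
    by (induction n) (simp_all add: Gs_def[of 0] Gs_Suc lessThan_Suc)
  have "Js n \<in> \<J> \<and> \<not> Js n \<subseteq> gen_right_ideal (I \<union> \<Union>(Js ` {..<n}))" for n
    using ch Gs prefix unfolding Js_def by metis
  then show ?thesis using that by auto
qed

lemma independent_over_range_if_prefix_Int:
  fixes Js :: "nat \<Rightarrow> 'a::ring_1 set"
  assumes I: "right_ideal I" and Js: "\<And>n. right_ideal (Js n)" "\<And>n. I \<subseteq> Js n"
    and prefix: "\<And>n. Js n \<inter> gen_right_ideal (I \<union> \<Union>(Js ` {..<n})) = I"
  shows "independent_over I (range Js)"
proof (rule independent_over_finite_character)
  have indep_prefix: "independent_over I (Js ` {..<n})" for n
  proof (induction n)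
    case 0
    then show ?case by (simp add: independent_over_def)
  next
    case (Suc n)
    have "independent_over I (insert (Js n) (Js ` {..<n}))"
      using independent_over_insert[OF I Js(1,2)] Suc.IH prefix Js(2) by blast
    then show ?case by (simp add: lessThan_Suc)
  qed
  fix G assume G: "finite G" "G \<subseteq> range Js"
  obtain N where N: "finite N" "G = Js ` N" using finite_subset_image[OF G] by blast
  then obtain n where "\<forall>i\<in>N. i < n" using finite_nat_set_iff_bounded by blast
  then have "G \<subseteq> Js ` {..<n}" using N(2) by blast
  then show "independent_over I G" using indep_prefix independent_over_subset by blast
qed

lemma independent_sequence_if_not_finitely_generated:
  assumes I: "right_ideal I" and \<J>: "\<forall>K\<in>\<J>. minimal_over I K"
    and not_fg: "\<And>G. finite G \<Longrightarrow> G \<subseteq> \<J> \<Longrightarrow> gen_right_ideal (I \<union> \<Union>G) \<noteq> gen_right_ideal (I \<union> \<Union>\<J>)"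
  obtains Js :: "nat \<Rightarrow> 'a::ring_1 set" where "range Js \<subseteq> \<J>" "inj Js" "independent_over I (range Js)"
proof -
  have escape: "\<exists>K\<in>\<J>. \<not> K \<subseteq> gen_right_ideal (I \<union> \<Union>G)" if G: "finite G" "G \<subseteq> \<J>" for G
  proof (rule ccontr)
    assume "\<not> ?thesis"
    then have "gen_right_ideal (I \<union> \<Union>\<J>) \<subseteq> gen_right_ideal (I \<union> \<Union>G)"
      using gen_right_ideal_lower[of I "\<Union>G"]
      by (intro gen_right_ideal_least[OF right_ideal_gen_right_ideal]) blast
    moreover have "gen_right_ideal (I \<union> \<Union>G) \<subseteq> gen_right_ideal (I \<union> \<Union>\<J>)"
      using G(2) by (intro gen_right_ideal_mono) blast
    ultimately show False using not_fg[OF G] by blast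
  qed
  obtain Js :: "nat \<Rightarrow> 'a set" where Js: "range Js \<subseteq> \<J>"
    and new: "\<And>n. \<not> Js n \<subseteq> gen_right_ideal (I \<union> \<Union>(Js ` {..<n}))"
    using greedy_sequence[OF escape] by blast
  have Js_min: "minimal_over I (Js n)" for n using Js \<J> by blast
  have "inj Js"
  proof (rule linorder_injI)
    fix m n :: nat assume "m < n"
    then have "Js m \<subseteq> gen_right_ideal (I \<union> \<Union>(Js ` {..<n}))" by (intro gen_right_ideal_member) simp
    then show "Js m \<noteq> Js n" using new[of n] by auto
  qed
  moreover have "independent_over I (range Js)"
  proof (rule independent_over_range_if_prefix_Int[OF I])
    show "right_ideal (Js n)" "I \<subseteq> Js n" for n
      using minimal_overD(1,2)[OF Js_min] by auto
    show "Js n \<inter> gen_right_ideal (I \<union> \<Union>(Js ` {..<n})) = I" for n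
      using minimal_over_Int_cases[OF Js_min right_ideal_gen_right_ideal gen_right_ideal_lower] new
      by blast
  qed
  ultimately show ?thesis using that Js by blast
qed

lemma independent_over_Int_tail:
  fixes Js :: "nat \<Rightarrow> 'a::ring_1 set"
  assumes "independent_over I (range Js)" "inj Js"
  shows "Js k \<inter> gen_right_ideal (I \<union> \<Union>(Js ` {Suc k..})) = I"
proof -
  have "Js k \<notin> Js ` {Suc k..}" using inj_eq[OF assms(2)] by auto
  then have eq: "insert (Js k) (Js ` {Suc k..}) - {Js k} = Js ` {Suc k..}" by blast
  have "independent_over I (insert (Js k) (Js ` {Suc k..}))"
    by (rule independent_over_subset[OF assms(1)]) auto
  then have "Js k \<inter> gen_right_ideal (I \<union> \<Union>(insert (Js k) (Js ` {Suc k..}) - {Js k})) = I"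
    unfolding independent_over_def by blast
  then show ?thesis unfolding eq .
qed

text \<open>A member of the sequence cannot drop out of the chain: it would lie in the sum of the later
  tail and P, hence, by the modular law and since its sum with the tail meets P only in I, in the
  later tail itself.\<close>

lemma independent_tails_plus_strict_descent:
  fixes Js :: "nat \<Rightarrow> 'a::ring_1 set"
  assumes P: "right_ideal P" and I: "right_ideal I" and H: "right_ideal H" "H \<inter> P = I"
    and Js: "\<And>n. minimal_over I (Js n)" "\<And>n. Js n \<subseteq> H" "inj Js" "independent_over I (range Js)"
  shows "gen_right_ideal (I \<union> \<Union>(Js ` {Suc k..})) + P \<subset> gen_right_ideal (I \<union> \<Union>(Js ` {k..})) + P"
proof -
  define T where "T k = gen_right_ideal (I \<union> \<Union>(Js ` {k..}))" for k
  have T: "right_ideal (T k)" "I \<subseteq> T k" "T k \<subseteq> H" for k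
  proof -
    show "right_ideal (T k)" unfolding T_def by (rule right_ideal_gen_right_ideal)
    show "I \<subseteq> T k" unfolding T_def by (rule gen_right_ideal_lower)
    have "I \<subseteq> H" using H(2) by blast
    then show "T k \<subseteq> H" unfolding T_def using Js(2) by (intro gen_right_ideal_least[OF H(1)]) blast
  qed
  have "T (Suc k) \<subseteq> T k" unfolding T_def by (intro gen_right_ideal_mono) auto
  then have le: "T (Suc k) + P \<subseteq> T k + P" by (intro set_plus_mono2 order_refl)
  have "T (Suc k) + P \<noteq> T k + P"
  proof
    assume eq: "T (Suc k) + P = T k + P"
    have "Js k \<subseteq> T k" unfolding T_def by (intro gen_right_ideal_member) simp
    moreover have "T k \<subseteq> T (Suc k) + P" using eq set_plus_upper1[OF P, of "T k"] by simp
    ultimately have "Js k \<subseteq> H \<inter> (T (Suc k) + P)" using T(3)[of k] by blast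
    also have "\<dots> = T (Suc k) + (H \<inter> P)" using right_ideal_modular[OF T(1) H(1) T(3)] .
    also have "\<dots> = T (Suc k)" unfolding H(2) using set_plus_absorb[OF T(1) I T(2)] .
    finally have "Js k \<subseteq> I" using independent_over_Int_tail[OF Js(4,3), of k] unfolding T_def by blast
    then show False using minimal_over_psubset[OF Js(1)] by blast
  qed
  with le show ?thesis unfolding T_def by blast
qed

lemma finitely_generated_if_artinian_quot:
  assumes art: "artinian_quot P" and P: "right_ideal P" and I: "right_ideal I"
    and \<J>: "\<forall>K\<in>\<J>. minimal_over I K" and HP: "gen_right_ideal (I \<union> \<Union>\<J>) \<inter> P = I"
  obtains F where "finite F" "F \<subseteq> \<J>" "gen_right_ideal (I \<union> \<Union>F) = gen_right_ideal (I \<union> \<Union>\<J>)"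
proof (cases "\<exists>F. finite F \<and> F \<subseteq> \<J> \<and> gen_right_ideal (I \<union> \<Union>F) = gen_right_ideal (I \<union> \<Union>\<J>)")
  case True
  then show ?thesis using that by auto
next
  case False
  then have "gen_right_ideal (I \<union> \<Union>G) \<noteq> gen_right_ideal (I \<union> \<Union>\<J>)" if "finite G" "G \<subseteq> \<J>" for G
    using that by blast
  then obtain Js :: "nat \<Rightarrow> 'a set" where Js: "range Js \<subseteq> \<J>" "inj Js" "independent_over I (range Js)"
    by (rule independent_sequence_if_not_finitely_generated[OF I \<J>])
  define D where "D k = gen_right_ideal (I \<union> \<Union>(Js ` {k..})) + P" for k
  have "D (Suc k) \<subset> D k" for k unfolding D_def
  proof (rule independent_tails_plus_strict_descent[OF P I right_ideal_gen_right_ideal HP _ _ Js(2,3)])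
    show "minimal_over I (Js n)" for n using Js(1) \<J> by blast
    show "Js n \<subseteq> gen_right_ideal (I \<union> \<Union>\<J>)" for n
      using Js(1) gen_right_ideal_member[of "Js n" \<J> I] by blast
  qed
  moreover have "right_ideal (D k)" "P \<subseteq> D k" for k
    unfolding D_def using right_ideal_plus[OF right_ideal_gen_right_ideal P]
      set_plus_upper2[OF right_ideal_gen_right_ideal] by blast+
  ultimately have "\<exists>f. \<forall>k. (f (Suc k), f k) \<in> {(A, B). right_ideal A \<and> right_ideal B \<and> P \<subseteq> A \<and> A \<subset> B}"
    by (intro exI[of _ D]) blast
  then show ?thesis using art unfolding artinian_quot_def wf_iff_no_infinite_down_chain by blast
qed

section \<open>The socle of a semiartinian ring\<close>

lemma right_ideal_socle_seq: "I \<in> socle_seq \<Longrightarrow> right_ideal I"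
proof (induction rule: socle_seq.induct)
  case zero
  show ?case by (rule right_ideal_zero)
next
  case (succ I)
  show ?case unfolding soc_succ_def by (rule right_ideal_gen_right_ideal)
next
  case (union C)
  then show ?case using right_ideal_Union_chain by blast
qed

lemma minimal_over_zero_Int:
  assumes I: "right_ideal I" and K: "minimal_over I K" and L: "right_ideal L"
    and LI: "L \<inter> I = {0}" and KL: "K \<subseteq> L + I"
  shows "minimal_over {0} (K \<inter> L)"
proof -
  have Kr: "right_ideal K" and IK: "I \<subset> K" using minimal_overD[OF K] by auto
  have KLr: "right_ideal (K \<inter> L)" using right_ideal_Int[OF Kr L] .
  obtain k where k: "k \<in> K" "k \<notin> I" using IK by blast
  then obtain l i where li: "k = l + i" "l \<in> L" "i \<in> I" using KL by (blast elim: set_plus_elim)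
  have "l = k - i" using li by simp
  then have "l \<in> K" using right_ideal_diff[OF Kr k(1)] li(3) IK by blast
  moreover have "l \<noteq> 0" using li k by auto
  ultimately have nonzero: "{0} \<subset> K \<inter> L" using li(2) right_ideal_0[OF KLr] by blast
  show ?thesis unfolding minimal_over_def
  proof (intro conjI KLr nonzero allI impI)
    fix Y assume Y: "right_ideal Y \<and> {0} \<subset> Y \<and> Y \<subseteq> K \<inter> L"
    have YI: "right_ideal (Y + I)" "I \<subseteq> Y + I" "Y + I \<subseteq> K"
      using right_ideal_plus[of Y I] set_plus_upper2[of Y I] set_plus_least[OF Kr, of Y I] Y I IK
      by auto
    moreover have "Y + I \<noteq> I"
    proof
      assume "Y + I = I"
      moreover obtain y where "y \<in> Y" "y \<noteq> 0" using Y by blast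
      ultimately have "y \<in> L \<inter> I" using set_plus_upper1[OF I, of Y] Y by blast
      then show False using LI \<open>y \<noteq> 0\<close> by blast
    qed
    ultimately have YIK: "Y + I = K" using minimal_over_cases[OF K] by blast
    have "K \<inter> L \<subseteq> Y"
    proof
      fix z assume z: "z \<in> K \<inter> L"
      then obtain y i where yi: "z = y + i" "y \<in> Y" "i \<in> I" using YIK by (blast elim: set_plus_elim)
      have "i = z - y" using yi by simp
      then have "i \<in> L" using right_ideal_diff[OF L] z yi Y by blast
      then have "i = 0" using LI yi by blast
      then show "z \<in> Y" using yi by simp
    qed
    then show "Y = K \<inter> L" using Y by blast
  qed
qed

text \<open>The socle of a semiartinian ring is essential: by transfinite induction along the socle
  sequence, a right ideal containing no minimal right ideal meets every term trivially.\<close>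

lemma socle_seq_Int_eq_zero:
  assumes L: "right_ideal L" and no_min: "\<And>K. minimal_over {0} K \<Longrightarrow> \<not> K \<subseteq> L"
    and I: "I \<in> socle_seq"
  shows "L \<inter> I = {0}"
  using I
proof (induction rule: socle_seq.induct)
  case zero
  show ?case using right_ideal_0[OF L] by blast
next
  case (succ I)
  have Ir: "right_ideal I" using right_ideal_socle_seq[OF succ.hyps] .
  have "x = 0" if x: "x \<in> L" "x \<in> soc_succ I" for x
  proof (rule ccontr)
    assume x0: "x \<noteq> 0"
    obtain G where G: "finite G" "G \<subseteq> {J. minimal_over I J}" "x \<in> gen_right_ideal (I \<union> \<Union>G)"
      using x(2) unfolding soc_succ_def by (rule gen_right_ideal_finite_support)
    define U where "U = (L + I) \<inter> gen_right_ideal (I \<union> \<Union>G)"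
    have Ur: "right_ideal U"
      unfolding U_def using right_ideal_Int[OF right_ideal_plus[OF L Ir] right_ideal_gen_right_ideal] .
    have "I \<subseteq> U" unfolding U_def using set_plus_upper2[OF L] gen_right_ideal_lower by blast
    moreover have "x \<in> U" unfolding U_def using set_plus_upper1[OF Ir, of L] x G by blast
    moreover have "x \<notin> I" using x x0 succ.IH by blast
    ultimately have "I \<subset> U" by blast
    moreover have "\<forall>K\<in>G. minimal_over I K" using G by blast
    ultimately obtain K where K: "minimal_over I K" "K \<subseteq> U"
      using minimal_over_below[OF Ir G(1) _ Ur] unfolding U_def by blast
    then have "minimal_over {0} (K \<inter> L)"
      using minimal_over_zero_Int[OF Ir K(1) L succ.IH] unfolding U_def by blast
    then show False using no_min by blast
  qed
  then show ?case
    using right_ideal_0[OF L] right_ideal_0[OF right_ideal_socle_seq[OF socle_seq.succ[OF succ.hyps]]]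
    by blast
next
  case (union C)
  then show ?case by blast
qed

lemma semiartinian_minimal_below:
  assumes SA: "semiartinian TYPE('a::ring_1)" and L: "right_ideal (L :: 'a set)" "L \<noteq> {0}"
  obtains K where "minimal_over {0} K" "K \<subseteq> L"
proof -
  have "L \<inter> UNIV \<noteq> {0}" using L(2) by simp
  then have "\<not> (\<forall>K. minimal_over {0} K \<longrightarrow> \<not> K \<subseteq> L)"
    using socle_seq_Int_eq_zero[OF L(1)] SA unfolding semiartinian_def by blast
  then show ?thesis using that by blast
qed

section \<open>Minimal right ideals of a regular ring\<close>

lemma right_ideal_image_mult_left:
  assumes J: "right_ideal J"
  shows "right_ideal ((*) t ` J)"
proof (rule right_idealI)
  show "0 \<in> (*) t ` J" using imageI[OF right_ideal_0[OF J], of "(*) t"] by simp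
  show "x + y \<in> (*) t ` J" if xy: "x \<in> (*) t ` J" "y \<in> (*) t ` J" for x y
  proof -
    obtain a b where ab: "a \<in> J" "b \<in> J" "x = t * a" "y = t * b" using xy by blast
    then show ?thesis using imageI[OF right_ideal_add[OF J ab(1,2)], of "(*) t"] by (simp add: distrib_left)
  qed
  show "- x \<in> (*) t ` J" if x: "x \<in> (*) t ` J" for x
  proof -
    obtain a where a: "a \<in> J" "x = t * a" using x by blast
    then show ?thesis using imageI[OF right_ideal_minus[OF J a(1)], of "(*) t"] by simp
  qed
  show "x * r \<in> (*) t ` J" if x: "x \<in> (*) t ` J" for x r
  proof -
    obtain a where a: "a \<in> J" "x = t * a" using x by blast
    then show ?thesis using imageI[OF right_ideal_mult[OF J a(1)], of "(*) t"] by (simp add: mult.assoc)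
  qed
qed

lemma minimal_right_ideal_idempotent:
  assumes reg: "vN_regular TYPE('a::ring_1)" and J: "minimal_over {0} (J :: 'a set)"
  obtains e where "e \<in> J" "e \<noteq> 0" "\<And>j. j \<in> J \<Longrightarrow> e * j = j"
proof -
  have Jr: "right_ideal J" and J0: "{0} \<subset> J" using minimal_overD[OF J] by auto
  obtain x where x: "x \<in> J" "x \<noteq> 0" using J0 by blast
  obtain y where y: "x * y * x = x" using reg unfolding vN_regular_def by blast
  define e where "e = x * y"
  have eJ: "e \<in> J" unfolding e_def using right_ideal_mult[OF Jr x(1)] .
  have idem: "e * e = e" unfolding e_def by (metis y mult.assoc)
  have e0: "e \<noteq> 0" using x y unfolding e_def by auto
  have "range ((*) e) \<subseteq> J" using right_ideal_mult[OF Jr eJ] by blast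
  moreover have "{0} \<subset> range ((*) e)" using e0 right_ideal_0[OF right_ideal_image_mult_left[OF right_ideal_UNIV]]
    by (metis mult_1_right psubsetI rangeI singletonD subsetI)
  ultimately have "range ((*) e) = J"
    using minimal_over_eq[OF J right_ideal_image_mult_left[OF right_ideal_UNIV]] by blast
  then have "e * j = j" if "j \<in> J" for j using that idem by (auto simp: mult.assoc[symmetric])
  then show ?thesis using that eJ e0 by blast
qed

lemma right_ideal_preimage_mult_left:
  assumes J: "right_ideal J" and Y: "right_ideal Y"
  shows "right_ideal {s \<in> J. t * s \<in> Y}"
  by (rule right_idealI)
    (auto simp: right_ideal_0[OF J] right_ideal_add[OF J] right_ideal_minus[OF J] right_ideal_mult[OF J]
      right_ideal_0[OF Y] right_ideal_add[OF Y] right_ideal_minus[OF Y] right_ideal_mult[OF Y]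
      distrib_left mult.assoc[symmetric])

lemma minimal_over_image_mult_left:
  assumes J: "minimal_over {0} J" and inj: "\<And>s. s \<in> J \<Longrightarrow> t * s = 0 \<Longrightarrow> s = 0"
  shows "minimal_over {0} ((*) t ` J)"
  unfolding minimal_over_def
proof (intro conjI allI impI)
  have Jr: "right_ideal J" and J0: "{0} \<subset> J" using minimal_overD[OF J] by auto
  show Tr: "right_ideal ((*) t ` J)" by (rule right_ideal_image_mult_left[OF Jr])
  show "{0} \<subset> (*) t ` J" using right_ideal_0[OF Tr] J0 inj by blast
  fix Y assume Y: "right_ideal Y \<and> {0} \<subset> Y \<and> Y \<subseteq> (*) t ` J"
  define W where "W = {s \<in> J. t * s \<in> Y}"
  have Wr: "right_ideal W" unfolding W_def using right_ideal_preimage_mult_left[OF Jr] Y by blast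
  obtain y where y: "y \<in> Y" "y \<noteq> 0" using Y by blast
  have "y \<in> (*) t ` J" using Y y(1) by auto
  then obtain s where "y = t * s" "s \<in> J" by (rule imageE)
  then have "s \<in> W" "s \<noteq> 0" using y unfolding W_def by auto
  then have "{0} \<subset> W" using right_ideal_0[OF Wr] by blast
  moreover have "W \<subseteq> J" unfolding W_def by blast
  ultimately have "W = J" using minimal_over_eq[OF J Wr] by blast
  then have "(*) t ` J \<subseteq> Y" unfolding W_def by blast
  then show "Y = (*) t ` J" using Y by blast
qed

lemma image_mult_left_minimal:
  assumes J: "minimal_over {0} J"
  shows "(*) t ` J = {0} \<or> (minimal_over {0} ((*) t ` J) \<and> rmod_iso {0} J ((*) t ` J) ((*) t))"
proof -
  have Jr: "right_ideal J" using minimal_over_right_ideal[OF J] .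
  define Z where "Z = {s \<in> J. t * s \<in> {0}}"
  have "right_ideal Z" unfolding Z_def by (rule right_ideal_preimage_mult_left[OF Jr right_ideal_zero])
  moreover have "{0} \<subseteq> Z" "Z \<subseteq> J" unfolding Z_def using right_ideal_0[OF Jr] by auto
  ultimately have "Z = {0} \<or> Z = J" using minimal_over_cases[OF J] by blast
  then show ?thesis
  proof
    assume "Z = J"
    then show ?thesis using right_ideal_0[OF Jr] unfolding Z_def by force
  next
    assume "Z = {0}"
    then have inj: "s = 0" if "s \<in> J" "t * s = 0" for s using that unfolding Z_def by blast
    have "rmod_iso {0} J ((*) t ` J) ((*) t)"
      unfolding rmod_iso_def rmod_hom_def using inj by (auto simp: distrib_left mult.assoc)
    then show ?thesis using minimal_over_image_mult_left[OF J inj] by blast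
  qed
qed

lemma maximal_right_ideal_annihilator:
  assumes J: "minimal_over {0} J" and eJ: "e \<in> J" and e0: "e \<noteq> 0"
  shows "maximal_right_ideal {r. e * r = 0}"
proof -
  have Jr: "right_ideal J" using minimal_overD[OF J] by auto
  define M where "M = {r. e * r = 0}"
  have Mr: "right_ideal M" unfolding M_def
    by (rule right_idealI) (auto simp: distrib_left mult.assoc[symmetric])
  have "1 \<notin> M" unfolding M_def using e0 by simp
  moreover have "N = M \<or> N = UNIV" if N: "right_ideal N" "M \<subseteq> N" for N
  proof -
    let ?E = "(*) e ` N"
    have Er: "right_ideal ?E" by (rule right_ideal_image_mult_left[OF N(1)])
    have "{0} \<subseteq> ?E" "?E \<subseteq> J" using right_ideal_0[OF Er] right_ideal_mult[OF Jr eJ] by blast+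
    then have "?E = {0} \<or> ?E = J" using minimal_over_cases[OF J Er] by blast
    then show ?thesis
    proof
      assume "?E = {0}"
      then show ?thesis using N unfolding M_def by blast
    next
      assume "?E = J"
      then obtain n where n: "n \<in> N" "e = e * n" using eJ by force
      then have "e * (1 - n) = 0" by (simp add: right_diff_distrib)
      then have "1 - n \<in> N" using N(2) unfolding M_def by blast
      from right_ideal_add[OF N(1) n(1) this] have "1 \<in> N" by simp
      then show ?thesis using right_ideal_mult[OF N(1)] by (metis UNIV_eq_I mult_1)
    qed
  qed
  ultimately show ?thesis unfolding maximal_right_ideal_def M_def[symmetric] using Mr by blast
qed

lemma primitive_ideal_annihilator:
  assumes "minimal_over {0} J" "e \<in> J" "e \<noteq> 0"
  shows "primitive_ideal {p. \<forall>x. e * (x * p) = 0}"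
  unfolding primitive_ideal_def
  by (intro exI[of _ "{r. e * r = 0}"] conjI maximal_right_ideal_annihilator[OF assms]) simp

lemma right_ideal_annihilator: "right_ideal {p. \<forall>x. e * (x * p) = 0}"
proof -
  have mult: "\<forall>x. e * (x * (p * r)) = 0" if "\<forall>x. e * (x * p) = 0" for p r
    using that by (metis mult.assoc mult_zero_left)
  show ?thesis
  proof (rule right_idealI)
    show "- p \<in> {p. \<forall>x. e * (x * p) = 0}" if "p \<in> {p. \<forall>x. e * (x * p) = 0}" for p
      using mult[of p "- 1"] that by simp
  qed (simp_all add: distrib_left mult)
qed

lemma rmod_iso_annihilator:
  assumes I: "right_ideal I" and f: "rmod_iso I J J' f" and Jp: "\<forall>j\<in>J. j * p \<in> I"
    and x: "x \<in> J'"
  shows "x * p \<in> I"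
proof -
  obtain j where j: "j \<in> J" "x - f j \<in> I" using f x unfolding rmod_iso_def by blast
  have "f (j * p) - f j * p \<in> I" "f (j * p) \<in> I"
    using f j(1) Jp unfolding rmod_iso_def rmod_hom_def by blast+
  then have "f (j * p) - (f (j * p) - f j * p) \<in> I" using right_ideal_diff[OF I] by blast
  then have "f j * p \<in> I" by simp
  moreover have "(x - f j) * p \<in> I" using right_ideal_mult[OF I j(2)] .
  ultimately have "(x - f j) * p + f j * p \<in> I" using right_ideal_add[OF I] by blast
  then show ?thesis by (simp add: algebra_simps)
qed

lemma homog_comp_annihilated:
  assumes P_left: "\<And>r p. p \<in> P \<Longrightarrow> r * p \<in> P" and JP: "\<And>j p. j \<in> J \<Longrightarrow> p \<in> P \<Longrightarrow> j * p = 0"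
    and h: "h \<in> homog_comp {0} J" and p: "p \<in> P"
  shows "h * p = 0"
proof -
  have "homog_comp {0} J \<subseteq> {h. \<forall>p\<in>P. h * p = 0}" unfolding homog_comp_def
  proof (rule gen_right_ideal_least)
    show "right_ideal {h. \<forall>p\<in>P. h * p = 0}"
      by (rule right_idealI) (simp_all add: distrib_right mult.assoc P_left)
    show "{0} \<union> \<Union>{J'. minimal_over {0} J' \<and> (\<exists>f. rmod_iso {0} J J' f)} \<subseteq> {h. \<forall>p\<in>P. h * p = 0}"
    proof safe
      fix K f x p assume "rmod_iso {0} J K f" "x \<in> K" "p \<in> P"
      then show "x * p = 0" using rmod_iso_annihilator[OF right_ideal_zero, of J K f p x] JP by simp
    qed simp
  qed
  then show ?thesis using h p by blast
qed

lemma regular_Int_annihilated: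
  assumes reg: "vN_regular TYPE('a::ring_1)" and H: "right_ideal (H :: 'a set)"
    and HP: "\<forall>h\<in>H. \<forall>p\<in>P. h * p = 0"
  shows "H \<inter> P \<subseteq> {0}"
proof
  fix h assume h: "h \<in> H \<inter> P"
  obtain z where "h * z * h = h" using reg unfolding vN_regular_def by blast
  moreover have "h * z * h = 0" using HP right_ideal_mult[OF H] h by blast
  ultimately show "h \<in> {0}" by simp
qed

text \<open>Writing J = eR, the homogeneous component of J is annihilated from the right by the
  annihilator P of the simple module R/{r. e r = 0}; by regularity it therefore meets P trivially,
  and as R/P is artinian it is a finite sum of copies of J.\<close>

lemma homog_comp_decomp_length_exists:
  assumes reg: "vN_regular TYPE('a::ring_1)" and pfa: "primitive_factors_artinian TYPE('a)"
    and J: "minimal_over {0} (J :: 'a set)"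
  shows "\<exists>n. decomp_length {0} (homog_comp {0} J) n"
proof -
  obtain e where e: "e \<in> J" "e \<noteq> 0" "\<And>j. j \<in> J \<Longrightarrow> e * j = j"
    using minimal_right_ideal_idempotent[OF reg J] by blast
  define P where "P = {p. \<forall>x. e * (x * p) = 0}"
  define \<J> where "\<J> = {J'. minimal_over {0} J' \<and> (\<exists>f. rmod_iso {0} J J' f)}"
  define H where "H = homog_comp {0} J"
  have H_eq: "H = gen_right_ideal ({0} \<union> \<Union>\<J>)" unfolding H_def \<J>_def homog_comp_def ..
  have \<J>: "\<forall>K\<in>\<J>. minimal_over {0} K" unfolding \<J>_def by blast
  have P: "right_ideal P" unfolding P_def by (rule right_ideal_annihilator)
  have art: "artinian_quot P"
    using pfa primitive_ideal_annihilator[OF J e(1,2)] unfolding primitive_factors_artinian_def P_def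
    by blast
  have "h * p = 0" if "h \<in> H" "p \<in> P" for h p
  proof (rule homog_comp_annihilated[OF _ _ that[unfolded H_def]])
    show "r * p \<in> P" if "p \<in> P" for r p
      using that unfolding P_def mem_Collect_eq by (metis mult.assoc)
    show "j * p = 0" if "j \<in> J" "p \<in> P" for j p
    proof -
      have "e * (j * p) = 0" using that(2) unfolding P_def by simp
      then show ?thesis using e(3)[OF that(1)] by (simp add: mult.assoc[symmetric])
    qed
  qed
  moreover have H_ri: "right_ideal H" unfolding H_eq by (rule right_ideal_gen_right_ideal)
  ultimately have "H \<inter> P \<subseteq> {0}" using regular_Int_annihilated[OF reg H_ri] by blast
  then have "H \<inter> P = {0}" using right_ideal_0[OF H_ri] right_ideal_0[OF P] by blast
  then obtain F where F: "finite F" "F \<subseteq> \<J>" "gen_right_ideal ({0} \<union> \<Union>F) = H"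
    unfolding H_eq by (rule finitely_generated_if_artinian_quot[OF art P right_ideal_zero \<J>])
  have "\<forall>K\<in>F. minimal_over {0} K" using F(2) \<J> by blast
  from decomp_length_exists[OF right_ideal_zero F(1) this] show ?thesis unfolding F(3) H_def .
qed

section \<open>From the bottom layer to commutativity\<close>

lemma rmod_iso_id: "right_ideal I \<Longrightarrow> I \<subseteq> J \<Longrightarrow> rmod_iso I J J id"
  unfolding rmod_iso_def rmod_hom_def using right_ideal_0[of I] by force

lemma homog_comp_member: "minimal_over I J' \<Longrightarrow> rmod_iso I J J' f \<Longrightarrow> J' \<subseteq> homog_comp I J"
  unfolding homog_comp_def by (rule gen_right_ideal_member) blast

lemma self_subset_homog_comp: "right_ideal I \<Longrightarrow> minimal_over I J \<Longrightarrow> J \<subseteq> homog_comp I J"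
  using homog_comp_member rmod_iso_id minimal_over_psubset by blast

lemma homog_comp_eq_if_dim_n_one:
  assumes I: "right_ideal I" and J: "minimal_over I J"
    and n: "decomp_length I (homog_comp I J) n" and one: "dim_n I J = 1"
  shows "homog_comp I J = J"
proof -
  have "decomp_length I (homog_comp I J) 1" using n dim_n_eqI[OF I n] one by simp
  then obtain F where F: "card F = 1" "\<forall>K\<in>F. minimal_over I K" "gen_right_ideal (I \<union> \<Union>F) = homog_comp I J"
    unfolding decomp_length_def by blast
  then obtain K where K: "F = {K}" by (meson card_1_singletonE)
  have Kmin: "minimal_over I K" using F(2) K by blast
  then have "I \<union> K = K" using minimal_over_psubset by blast
  then have HK: "homog_comp I J = K"
    using F(3) K gen_right_ideal_eq[OF minimal_over_right_ideal[OF Kmin]] by simp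
  then have "J = K"
    using minimal_over_eq[OF Kmin minimal_over_right_ideal[OF J] minimal_over_psubset[OF J]]
      self_subset_homog_comp[OF I J] by blast
  then show ?thesis using HK by simp
qed

lemma mult_left_mem_if_homog_comp_eq:
  assumes J: "minimal_over {0} J" and hJ: "homog_comp {0} J = J" and s: "s \<in> J"
  shows "t * s \<in> J"
  using image_mult_left_minimal[OF J, of t]
proof
  assume "(*) t ` J = {0}"
  then have "t * s = 0" using s by blast
  then show ?thesis using right_ideal_0[OF minimal_over_right_ideal[OF J]] by simp
next
  assume "minimal_over {0} ((*) t ` J) \<and> rmod_iso {0} J ((*) t ` J) ((*) t)"
  then have "(*) t ` J \<subseteq> homog_comp {0} J" using homog_comp_member by blast
  then show ?thesis using hJ s by blast
qed

text \<open>Left multiplications by elements of J are endomorphisms of J, so commutators of elements of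
  J annihilate J; but a regular element of J annihilating J is zero.\<close>

lemma commutative_if_end_commutative:
  assumes reg: "vN_regular TYPE('a::ring_1)" and J: "minimal_over {0} (J :: 'a set)"
    and two_sided: "\<And>t s. s \<in> J \<Longrightarrow> t * s \<in> J" and ec: "end_commutative {0} J"
    and u: "u \<in> J" and v: "v \<in> J"
  shows "u * v = v * u"
proof -
  have Jr: "right_ideal J" using minimal_over_right_ideal[OF J] .
  have hom: "rmod_hom {0} J J ((*) c)" for c
    unfolding rmod_hom_def using two_sided by (simp add: distrib_left mult.assoc)
  define w where "w = u * v - v * u"
  have w0: "w * x = 0" if "x \<in> J" for x
  proof -
    have "u * (v * x) - v * (u * x) \<in> {0}"
      using ec hom[of u] hom[of v] that unfolding end_commutative_def by blast
    then show ?thesis unfolding w_def by (simp add: left_diff_distrib mult.assoc)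
  qed
  obtain z where z: "w * z * w = w" using reg unfolding vN_regular_def by blast
  have "w \<in> J" unfolding w_def using right_ideal_diff[OF Jr] right_ideal_mult[OF Jr] u v by blast
  then have "w * (z * w) = 0" using w0 two_sided by blast
  then have "w = 0" using z by (simp add: mult.assoc)
  then show ?thesis unfolding w_def by simp
qed

lemma commutator_annihilates_minimal:
  assumes reg: "vN_regular TYPE('a::ring_1)" and J: "minimal_over {0} (J :: 'a set)"
    and two_sided: "\<And>t s. s \<in> J \<Longrightarrow> t * s \<in> J" and ec: "end_commutative {0} J"
    and s: "s \<in> J"
  shows "(a * b - b * a) * s = 0"
proof -
  obtain e where e: "e \<in> J" "\<And>j. j \<in> J \<Longrightarrow> e * j = j"
    using minimal_right_ideal_idempotent[OF reg J] by blast
  have ae: "a * e \<in> J" and be: "b * e \<in> J" using two_sided e(1) by blast+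
  have "a * b * e = (a * e) * (b * e)" using e(2)[OF be] by (simp add: mult.assoc)
  also have "\<dots> = (b * e) * (a * e)" by (rule commutative_if_end_commutative[OF reg J two_sided ec ae be])
  also have "\<dots> = b * a * e" using e(2)[OF ae] by (simp add: mult.assoc)
  finally have "(a * b - b * a) * e = 0" by (simp add: left_diff_distrib)
  then have "(a * b - b * a) * (e * s) = 0" by (simp add: mult.assoc[symmetric])
  then show ?thesis using e(2)[OF s] by simp
qed

lemma right_ideal_socle_annihilator:
  "right_ideal {x :: 'a::ring_1. \<forall>J. minimal_over {0} J \<longrightarrow> (\<forall>s\<in>J. x * s = 0)}"
  (is "right_ideal ?L")
proof (rule right_idealI)
  show "0 \<in> ?L" by simp
  show "x + y \<in> ?L" if "x \<in> ?L" "y \<in> ?L" for x y using that by (simp add: distrib_right)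
  show "- x \<in> ?L" if "x \<in> ?L" for x using that by simp
  show "x * t \<in> ?L" if x: "x \<in> ?L" for x t
  proof (intro CollectI allI impI ballI)
    fix J :: "'a set" and s assume J: "minimal_over {0} J" and s: "s \<in> J"
    from image_mult_left_minimal[OF J, of t] have "x * (t * s) = 0"
    proof
      assume "(*) t ` J = {0}"
      then have "t * s = 0" using s by blast
      then show ?thesis by simp
    next
      assume "minimal_over {0} ((*) t ` J) \<and> rmod_iso {0} J ((*) t ` J) ((*) t)"
      then show ?thesis using x s by blast
    qed
    then show "x * t * s = 0" by (simp add: mult.assoc)
  qed
qed

text \<open>The left annihilator of the socle contains no minimal right ideal, by regularity; as the
  socle is essential, it is zero.\<close>

lemma eq_0_if_annihilates_minimal_right_ideals:
  assumes reg: "vN_regular TYPE('a::ring_1)" and SA: "semiartinian TYPE('a)"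
    and r: "\<And>J s. minimal_over {0} J \<Longrightarrow> s \<in> J \<Longrightarrow> (r :: 'a) * s = 0"
  shows "r = 0"
proof -
  define L where "L = {x :: 'a. \<forall>J. minimal_over {0} J \<longrightarrow> (\<forall>s\<in>J. x * s = 0)}"
  have "\<not> K \<subseteq> L" if K: "minimal_over {0} K" for K :: "'a set"
  proof
    assume KL: "K \<subseteq> L"
    obtain k where k: "k \<in> K" "k \<noteq> 0" using minimal_over_psubset[OF K] by blast
    obtain z where z: "k * z * k = k" using reg unfolding vN_regular_def by blast
    from image_mult_left_minimal[OF K, of z] have "k * (z * k) = 0"
    proof
      assume "(*) z ` K = {0}"
      then have "z * k = 0" using k by blast
      then show ?thesis by simp
    next
      assume "minimal_over {0} ((*) z ` K) \<and> rmod_iso {0} K ((*) z ` K) ((*) z)"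
      then show ?thesis using KL k unfolding L_def by blast
    qed
    then show False using z k by (simp add: mult.assoc)
  qed
  moreover have "right_ideal L" unfolding L_def by (rule right_ideal_socle_annihilator)
  ultimately have "L = {0}" using semiartinian_minimal_below[OF SA] by blast
  moreover have "r \<in> L" unfolding L_def using r by blast
  ultimately show ?thesis by blast
qed

lemma commutative_if_layer_cond_zero:
  assumes reg: "vN_regular TYPE('a::ring_1)" and SA: "semiartinian TYPE('a)"
    and pfa: "primitive_factors_artinian TYPE('a)" and lc: "layer_cond ({0} :: 'a set)"
  shows "a * b = b * (a :: 'a)"
proof -
  have "(a * b - b * a) * s = 0" if J: "minimal_over {0} J" and s: "s \<in> J" for J s
  proof -
    obtain n where n: "decomp_length {0} (homog_comp {0} J) n"
      using homog_comp_decomp_length_exists[OF reg pfa J] by blast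
    have "end_commutative {0} J" "dim_n {0} J = 1" using lc J unfolding layer_cond_def by blast+
    moreover from this(2) have "homog_comp {0} J = J"
      by (rule homog_comp_eq_if_dim_n_one[OF right_ideal_zero J n])
    ultimately show ?thesis
      using commutator_annihilates_minimal[OF reg J mult_left_mem_if_homog_comp_eq[OF J] _ s] by blast
  qed
  then have "a * b - b * a = 0" by (rule eq_0_if_annihilates_minimal_right_ideals[OF reg SA])
  then show ?thesis by simp
qed

section \<open>Commutative regular rings\<close>

lemma rmod_hom_cong:
  assumes I: "right_ideal I" "I \<subseteq> J" and f: "rmod_hom I J J' f"
    and x: "x \<in> J" "y \<in> J" "x - y \<in> I"
  shows "f x - f y \<in> I"
proof -
  have "x - y \<in> J" using x(3) I(2) by blast
  then have "f ((x - y) + y) - (f (x - y) + f y) \<in> I" "f (x - y) \<in> I"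
    using f x unfolding rmod_hom_def by blast+
  then have "(f ((x - y) + y) - (f (x - y) + f y)) + f (x - y) \<in> I" by (rule right_ideal_add[OF I(1)])
  then show ?thesis by simp
qed

lemma minimal_over_generator:
  assumes I: "right_ideal I" and J: "minimal_over I J" and e: "e \<in> J" "e \<notin> I" and x: "x \<in> J"
  obtains r where "x - e * r \<in> I"
proof -
  have Jr: "right_ideal J" and IJ: "I \<subset> J" using minimal_overD[OF J] by auto
  define E where "E = I + range ((*) e)"
  have Er: "right_ideal E"
    unfolding E_def using right_ideal_plus[OF I right_ideal_image_mult_left[OF right_ideal_UNIV]] .
  have "E \<subseteq> J" unfolding E_def using set_plus_least[OF Jr] IJ right_ideal_mult[OF Jr e(1)] by blast
  moreover have "e \<in> E"
    unfolding E_def using set_plus_intro[OF right_ideal_0[OF I] rangeI[of "(*) e" 1]] by simp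
  then have "I \<subset> E" using set_plus_upper1[OF right_ideal_image_mult_left[OF right_ideal_UNIV], of I e] e(2)
    unfolding E_def by blast
  ultimately have "E = J" using minimal_over_eq[OF J Er] by blast
  then obtain i r where "x = i + e * r" "i \<in> I" using x unfolding E_def by (blast elim: set_plus_elim)
  then show ?thesis using that[of r] by simp
qed

lemma rmod_hom_mult_form:
  assumes I: "right_ideal I" "I \<subseteq> J" and J: "right_ideal J" and e: "e \<in> J"
    and f: "rmod_hom I J J f" and a: "f e - e * a \<in> I" and x: "x \<in> J" "x - e * r \<in> I"
  shows "f x - e * (a * r) \<in> I"
proof -
  have er: "e * r \<in> J" using right_ideal_mult[OF J e] .
  have "f x - f (e * r) \<in> I" using rmod_hom_cong[OF I f x(1) er x(2)] .
  moreover have "f (e * r) - f e * r \<in> I" using f e unfolding rmod_hom_def by blast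
  moreover have "(f e - e * a) * r \<in> I" using right_ideal_mult[OF I(1) a] .
  ultimately have "(f x - f (e * r)) + (f (e * r) - f e * r) + (f e - e * a) * r \<in> I"
    using right_ideal_add[OF I(1)] by blast
  then show ?thesis by (simp add: algebra_simps)
qed

context
  fixes I J :: "'a::ring_1 set"
  assumes comm: "\<And>a b :: 'a. a * b = b * a"
    and I: "right_ideal I" and J: "minimal_over I J"
begin

text \<open>J/I is cyclic, generated by any e in J - I, so every endomorphism of it is left
  multiplication by a ring element.\<close>

lemma end_commutative_if_commutative: "end_commutative I J"
  unfolding end_commutative_def
proof (intro allI impI ballI)
  fix f g x assume f: "rmod_hom I J J f" and g: "rmod_hom I J J g" and x: "x \<in> J"
  have Jr: "right_ideal J" and IJ: "I \<subset> J" using minimal_overD[OF J] by auto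
  obtain e where e: "e \<in> J" "e \<notin> I" using IJ by blast
  note rep = minimal_over_generator[OF I J e]
  note mult_form = rmod_hom_mult_form[OF I psubset_imp_subset[OF IJ] Jr e(1)]
  have fJ: "f e \<in> J" "f x \<in> J" and gJ: "g e \<in> J" "g x \<in> J"
    using f g e(1) x unfolding rmod_hom_def by blast+
  obtain a where a: "f e - e * a \<in> I" using rep[OF fJ(1)] .
  obtain b where b: "g e - e * b \<in> I" using rep[OF gJ(1)] .
  obtain r where r: "x - e * r \<in> I" using rep[OF x] .
  have "a * (b * r) = b * (a * r)" using comm by (metis mult.assoc)
  moreover have "f (g x) - e * (a * (b * r)) \<in> I"
    by (rule mult_form[OF f a gJ(2) mult_form[OF g b x r]])
  ultimately have fg: "f (g x) - e * (b * (a * r)) \<in> I" by simp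
  have gf: "g (f x) - e * (b * (a * r)) \<in> I"
    by (rule mult_form[OF g b fJ(2) mult_form[OF f a x r]])
  from right_ideal_diff[OF I fg gf] show "f (g x) - g (f x) \<in> I" by simp
qed

text \<open>Over a commutative regular ring distinct simple subquotients J/I and J'/I are never
  isomorphic: J J' lies in J \<inter> J' = I, so J' annihilates J/I but, by regularity, not J'/I.\<close>

lemma subset_if_rmod_iso:
  assumes reg: "vN_regular TYPE('a)" and J': "minimal_over I J'" and f: "rmod_iso I J J' f"
  shows "J' \<subseteq> J"
proof (rule ccontr)
  assume "\<not> J' \<subseteq> J"
  have Jr: "right_ideal J" and IJ: "I \<subset> J" using minimal_overD[OF J] by auto
  have J'r: "right_ideal J'" using minimal_over_right_ideal[OF J'] .
  have JJ': "J \<inter> J' = I"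
    using minimal_over_Int_cases[OF J' Jr] IJ \<open>\<not> J' \<subseteq> J\<close> by (auto simp: Int_commute)
  have "y \<in> I" if y: "y \<in> J'" for y
  proof -
    have "j * y \<in> I" if "j \<in> J" for j
    proof -
      have "j * y \<in> J" using right_ideal_mult[OF Jr that] .
      moreover have "j * y \<in> J'" using right_ideal_mult[OF J'r y, of j] comm[of y j] by simp
      ultimately show ?thesis using JJ' by blast
    qed
    then have "x * y \<in> I" if "x \<in> J'" for x using rmod_iso_annihilator[OF I f _ that] by blast
    moreover obtain z where "y * z * y = y" using reg unfolding vN_regular_def by blast
    ultimately show ?thesis using right_ideal_mult[OF J'r y, of z] by metis
  qed
  then show False using minimal_over_psubset[OF J'] by blast
qed

lemma homog_comp_eq_if_commutative:
  assumes reg: "vN_regular TYPE('a)"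
  shows "homog_comp I J = J"
proof
  have Jr: "right_ideal J" and IJ: "I \<subset> J" using minimal_overD[OF J] by auto
  show "homog_comp I J \<subseteq> J" unfolding homog_comp_def
    using subset_if_rmod_iso[OF reg] IJ by (intro gen_right_ideal_least[OF Jr]) blast
  show "J \<subseteq> homog_comp I J" by (rule self_subset_homog_comp[OF I J])
qed

lemma dim_n_eq_one_if_commutative:
  assumes reg: "vN_regular TYPE('a)"
  shows "dim_n I J = 1"
proof (rule dim_n_eqI[OF I])
  have Jr: "right_ideal J" and IJ: "I \<subset> J" using minimal_overD[OF J] by auto
  have "I \<union> \<Union>{J} = J" using IJ by blast
  then have "gen_right_ideal (I \<union> \<Union>{J}) = J" using gen_right_ideal_eq[OF Jr] by simp
  moreover have "independent_over I {J}"
    unfolding independent_over_def using gen_right_ideal_eq[OF I] IJ by auto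
  ultimately show "decomp_length I (homog_comp I J) 1"
    unfolding decomp_length_iff homog_comp_eq_if_commutative[OF reg] using J
    by (intro exI[of _ "{J}"]) auto
qed

end

lemma layer_cond_if_commutative:
  assumes reg: "vN_regular TYPE('a::ring_1)" and comm: "\<And>a b :: 'a. a * b = b * a"
    and I: "right_ideal (I :: 'a set)"
  shows "layer_cond I"
  unfolding layer_cond_def
  using end_commutative_if_commutative[OF comm I] dim_n_eq_one_if_commutative[OF comm I _ reg] by blast

theorem corollary3p6:
  assumes "vN_regular TYPE('a::ring_1)"
    and "semiartinian TYPE('a)"
    and "primitive_factors_artinian TYPE('a)"
  shows "((\<forall>a b::'a. a * b = b * a)
            \<longleftrightarrow> (\<forall>I::'a set. I \<in> socle_seq \<and> I \<noteq> UNIV \<longrightarrow> layer_cond I))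
       \<and> ((\<forall>I::'a set. I \<in> socle_seq \<and> I \<noteq> UNIV \<longrightarrow> layer_cond I)
            \<longleftrightarrow> layer_cond ({0}::'a set))"
proof -
  let ?comm = "\<forall>a b::'a. a * b = b * a"
  let ?layers = "\<forall>I::'a set. I \<in> socle_seq \<and> I \<noteq> UNIV \<longrightarrow> layer_cond I"
  have "?comm \<Longrightarrow> ?layers"
    using layer_cond_if_commutative[OF assms(1)] right_ideal_socle_seq by blast
  moreover have "({0} :: 'a set) \<noteq> UNIV"
  proof
    assume "({0} :: 'a set) = UNIV"
    then have "(1 :: 'a) \<in> {0}" by simp
    then show False by simp
  qed
  then have "?layers \<Longrightarrow> layer_cond ({0} :: 'a set)" using socle_seq.zero by blast
  moreover have "layer_cond ({0} :: 'a set) \<Longrightarrow> ?comm"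
    using commutative_if_layer_cond_zero[OF assms] by blast
  ultimately show ?thesis by blast
qed

end
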